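(* Let $B$ be a finite nonempty subset of $\mathbb{R}/\mathbb{Z}$ and let $C\subseteq B$ satisfy $C-B=B-B$. For $c\in C$ let $b_c^-$ and $b_c^+$ be the smaller and larger neighbours of $c$ in $B$, and let $R^-=\{c-b_c^-: c\in C\}$ and $R^+=\{c-b_c^+: c\in C\}$. Then every element of $B-B$ is a sum (in $\mathbb{R}/\mathbb{Z}$) of elements of $R^-$, and also a sum of elements of $R^+$; that is, $$B-B\subseteq\langle R^-\rangle_{\mathbb{N}_0}=\langle R^+\rangle_{\mathbb{N}_0}.$$
   Context: $X-Y=\{x-y: x\in X, y\in Y\}$. A finite subset of $\mathbb{R}/\mathbb{Z}$ is ordered circularly (anticlockwise around the circle); each point has a smaller neighbour (the point immediately before it) and a larger neighbour (the point immediately after it) in this circular order, where the first point is regarded as coming after the last. For a set $R\subseteq\mathbb{R}/\mathbb{Z}$, $\langle R\rangle_{\mathbb{N}_0}$ denotes the set of all finite sums $\sum_{r\in R} n_r r$ with $n_r\in\mathbb{N}_0=\{0,1,2,\dots\}$. *)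

theory Defs
  imports Complex_Main
begin

text \<open>The circle R/Z is represented by the canonical representatives in [0,1);
  the group operations are taken modulo 1 via frac.\<close>

definition circ_sub :: "real \<Rightarrow> real \<Rightarrow> real" where
  "circ_sub x y = frac (x - y)"

definition circ_setdiff :: "real set \<Rightarrow> real set \<Rightarrow> real set" where
  "circ_setdiff X Y = {circ_sub x y | x y. x \<in> X \<and> y \<in> Y}"

definition gap_up :: "real \<Rightarrow> real \<Rightarrow> real" where
  "gap_up c b = (if b = c then 1 else frac (b - c))"

definition gap_down :: "real \<Rightarrow> real \<Rightarrow> real" where
  "gap_down c b = (if b = c then 1 else frac (c - b))"

definition larger_nb :: "real set \<Rightarrow> real \<Rightarrow> real" where
  "larger_nb B c = (THE b. b \<in> B \<and> (\<forall>b'\<in>B. gap_up c b \<le> gap_up c b'))"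

definition smaller_nb :: "real set \<Rightarrow> real \<Rightarrow> real" where
  "smaller_nb B c = (THE b. b \<in> B \<and> (\<forall>b'\<in>B. gap_down c b \<le> gap_down c b'))"

definition R_minus :: "real set \<Rightarrow> real set \<Rightarrow> real set" where
  "R_minus B C = {circ_sub c (smaller_nb B c) | c. c \<in> C}"

definition R_plus :: "real set \<Rightarrow> real set \<Rightarrow> real set" where
  "R_plus B C = {circ_sub c (larger_nb B c) | c. c \<in> C}"

definition nat_span :: "real set \<Rightarrow> real set" where
  "nat_span R = {frac (\<Sum>r\<in>R. real (n r) * r) | n :: real \<Rightarrow> nat. True}"

end

theory Submission
  imports Defs
begin

text \<open>Write \<open>d \<in> B - B\<close> as \<open>c - b\<close> with \<open>c \<in> C\<close> and measure it by its representative in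
  \<open>[0,1)\<close>. The smaller neighbour \<open>s\<close> of \<open>c\<close> lies on the arc from \<open>b\<close> to \<open>c\<close>, so
  \<open>d = (c - s) + (s - b)\<close> with \<open>c - s \<in> R\<^sup>-\<close> and \<open>s - b \<in> B - B\<close> strictly shorter; descending
  along this measure writes \<open>d\<close> as a sum of elements of \<open>R\<^sup>-\<close>. Reflecting the circle exchanges
  larger and smaller neighbours, which gives the same for \<open>R\<^sup>+\<close>. As both \<open>R\<^sup>-\<close> and \<open>R\<^sup>+\<close> lie in
  \<open>B - B\<close>, each of them lies in the span of the other, so the spans coincide.\<close>

lemma frac_diff_eq_0_iff: "frac (x - y) = 0 \<longleftrightarrow> frac x = frac y"
  using frac_diff_eq frac_diff_zero by metis

lemma gap_up_eq_gap_down_uminus: "gap_up c b = gap_down (- c) (- b)"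
  by (simp add: gap_up_def gap_down_def)

text \<open>Point sets are only required to be distinct modulo 1 (\<open>inj_on frac B\<close>) rather than to lie
  in \<open>[0,1)\<close>, so that the reflected set \<open>uminus ` B\<close> is covered as well.\<close>

lemma inj_on_frac_uminus:
  assumes "inj_on frac B"
  shows "inj_on frac (uminus ` B)"
  using assms by (auto intro!: inj_onI simp: frac_neg_eq_iff dest: inj_onD)

lemma inj_on_gap_down:
  assumes "inj_on frac B"
  shows "inj_on (gap_down c) B"
proof (rule inj_onI)
  fix x y assume "x \<in> B" "y \<in> B" and eq: "gap_down c x = gap_down c y"
  show "x = y"
  proof (cases "x = c \<or> y = c")
    case True
    then show ?thesis using eq frac_lt_1 unfolding gap_down_def by (metis less_irrefl)
  next
    case False
    then have "frac (c - x) = frac (c - y)" using eq by (simp add: gap_down_def)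
    then have "frac (y - x) = 0" using frac_diff_eq[of "c - x" "c - y"] by simp
    then have "frac y = frac x" by (rule frac_diff_zero)
    then show ?thesis using assms \<open>x \<in> B\<close> \<open>y \<in> B\<close> by (auto dest: inj_onD)
  qed
qed

lemma inj_on_gap_up:
  assumes "inj_on frac B"
  shows "inj_on (gap_up c) B"
proof -
  have "gap_up c = gap_down (- c) \<circ> uminus"
    by (simp add: fun_eq_iff gap_up_eq_gap_down_uminus)
  then show ?thesis
    using comp_inj_on[OF inj_uminus inj_on_gap_down[OF inj_on_frac_uminus[OF assms]]] by simp
qed

lemma ex1_argmin_inj_on:
  fixes g :: "'a \<Rightarrow> 'b::linorder"
  assumes "finite B" "B \<noteq> {}" "inj_on g B"
  shows "\<exists>!b. b \<in> B \<and> (\<forall>b'\<in>B. g b \<le> g b')"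
proof -
  have "Min (g ` B) \<in> g ` B" using assms(1,2) by simp
  then obtain b where b: "b \<in> B" "g b = Min (g ` B)" by auto
  then have min: "\<forall>b'\<in>B. g b \<le> g b'" using assms(1) by simp
  show ?thesis
  proof (rule ex1I[of _ b])
    fix x assume x: "x \<in> B \<and> (\<forall>b'\<in>B. g x \<le> g b')"
    then have "g x = g b" using b(1) min by (meson order_antisym)
    then show "x = b" using assms(3) b x by (meson inj_onD)
  qed (use b min in simp)
qed

lemma smaller_nb:
  assumes "finite B" "B \<noteq> {}" "inj_on frac B"
  shows "smaller_nb B c \<in> B \<and> (\<forall>b\<in>B. gap_down c (smaller_nb B c) \<le> gap_down c b)"
  unfolding smaller_nb_def
  by (rule theI'[OF ex1_argmin_inj_on[OF assms(1,2) inj_on_gap_down[OF assms(3)]]])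

lemma larger_nb:
  assumes "finite B" "B \<noteq> {}" "inj_on frac B"
  shows "larger_nb B c \<in> B \<and> (\<forall>b\<in>B. gap_up c (larger_nb B c) \<le> gap_up c b)"
  unfolding larger_nb_def
  by (rule theI'[OF ex1_argmin_inj_on[OF assms(1,2) inj_on_gap_up[OF assms(3)]]])

lemma frac_diff_less_if_gap_down_le:
  assumes "inj_on frac B" "b \<in> B" "c \<in> B" "s \<in> B" "b \<noteq> c"
    and le: "gap_down c s \<le> gap_down c b"
  shows "frac (s - b) < frac (c - b)"
proof -
  have gap_b: "gap_down c b = frac (c - b)" using \<open>b \<noteq> c\<close> by (simp add: gap_down_def)
  have "s \<noteq> c"
    using le frac_lt_1[of "c - b"] \<open>b \<noteq> c\<close> by (auto simp: gap_down_def)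
  then have gap_s: "gap_down c s = frac (c - s)" by (simp add: gap_down_def)
  have "frac c \<noteq> frac s" using assms(1,3,4) \<open>s \<noteq> c\<close> by (auto dest: inj_onD)
  then have pos: "0 < frac (c - s)"
    by (metis frac_diff_eq_0_iff frac_ge_0 order_le_less)
  have "frac (s - b) = frac ((c - b) - (c - s))" by simp
  also have "\<dots> = frac (c - b) - frac (c - s)"
    by (rule frac_diff_pos) (use le gap_b gap_s in simp)
  finally show ?thesis using pos by simp
qed

lemma frac_diff_smaller_nb_less:
  assumes "finite B" "inj_on frac B" "b \<in> B" "c \<in> B" "b \<noteq> c"
  shows "frac (smaller_nb B c - b) < frac (c - b)"
  using smaller_nb[OF assms(1) _ assms(2), of c] assms
  by (intro frac_diff_less_if_gap_down_le[of B]) auto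

lemma frac_diff_larger_nb_less:
  assumes "finite B" "inj_on frac B" "b \<in> B" "c \<in> B" "b \<noteq> c"
  shows "frac (b - larger_nb B c) < frac (b - c)"
proof -
  define p where "p = larger_nb B c"
  have "p \<in> B" "gap_down (- c) (- p) \<le> gap_down (- c) (- b)"
    using larger_nb[OF assms(1) _ assms(2), of c] assms(3,4)
    by (auto simp: p_def gap_up_eq_gap_down_uminus)
  then have "frac (- p - - b) < frac (- c - - b)"
    using assms by (intro frac_diff_less_if_gap_down_le[OF inj_on_frac_uminus]) auto
  then show ?thesis by (simp add: p_def)
qed

lemma nat_span_zero: "0 \<in> nat_span R"
  unfolding nat_span_def by (auto intro!: exI[of _ "\<lambda>_. 0"])

lemma nat_span_add:
  assumes "x \<in> nat_span R" "y \<in> nat_span R"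
  shows "frac (x + y) \<in> nat_span R"
proof -
  obtain n m where "x = frac (\<Sum>r\<in>R. real (n r) * r)" "y = frac (\<Sum>r\<in>R. real (m r) * r)"
    using assms unfolding nat_span_def by auto
  then have "frac (x + y) = frac (\<Sum>r\<in>R. real (n r + m r) * r)"
    by (simp add: sum.distrib distrib_right)
  then show ?thesis unfolding nat_span_def by (auto intro!: exI[of _ "\<lambda>r. n r + m r"])
qed

lemma nat_span_mult_of_nat:
  assumes "x \<in> nat_span R"
  shows "frac (of_nat k * x) \<in> nat_span R"
proof (induction k)
  case 0
  then show ?case using nat_span_zero by simp
next
  case (Suc k)
  have "frac (of_nat (Suc k) * x) = frac (frac (of_nat k * x) + x)" by (simp add: algebra_simps)
  then show ?case using nat_span_add[OF Suc assms] by simp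
qed

lemma frac_in_nat_span:
  assumes "finite R" "r \<in> R"
  shows "frac r \<in> nat_span R"
proof -
  have "(\<Sum>t\<in>R. real (if t = r then 1 else 0) * t) = r"
    using assms by (simp add: if_distrib[of "\<lambda>n. real n * _"] sum.If_cases)
  then show ?thesis unfolding nat_span_def by (auto intro!: exI[of _ "\<lambda>t. if t = r then 1 else 0"])
qed

lemma frac_sum_in_nat_span:
  assumes "finite R" "R \<subseteq> nat_span S"
  shows "frac (\<Sum>r\<in>R. real (n r) * r) \<in> nat_span S"
  using assms
proof (induction R rule: finite_induct)
  case empty
  then show ?case using nat_span_zero by simp
next
  case (insert a R)
  have "frac (\<Sum>r\<in>insert a R. real (n r) * r)
      = frac (frac (real (n a) * a) + frac (\<Sum>r\<in>R. real (n r) * r))"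
    using insert.hyps by simp
  then show ?case using nat_span_add[OF nat_span_mult_of_nat insert.IH] insert.prems by auto
qed

lemma nat_span_subset_nat_span:
  assumes "finite R" "R \<subseteq> nat_span S"
  shows "nat_span R \<subseteq> nat_span S"
  using frac_sum_in_nat_span[OF assms] unfolding nat_span_def[of R] by auto

lemma subset_nat_span_by_descent:
  fixes \<mu> :: "real \<Rightarrow> real"
  assumes "finite D" "finite R"
    and descent: "\<And>d. d \<in> D \<Longrightarrow> d \<noteq> 0 \<Longrightarrow> \<exists>r\<in>R. \<exists>d'\<in>D. \<mu> d' < \<mu> d \<and> d = frac (r + d')"
  shows "D \<subseteq> nat_span R"
proof
  fix d assume "d \<in> D"
  then show "d \<in> nat_span R"
  proof (induction "card {x\<in>D. \<mu> x < \<mu> d}" arbitrary: d rule: less_induct)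
    case less
    show ?case
    proof (cases "d = 0")
      case True
      then show ?thesis by (simp add: nat_span_zero)
    next
      case False
      then obtain r d' where "r \<in> R" "d' \<in> D" "\<mu> d' < \<mu> d" and d: "d = frac (r + d')"
        using descent less.prems by blast
      then have "card {x\<in>D. \<mu> x < \<mu> d'} < card {x\<in>D. \<mu> x < \<mu> d}"
        using assms(1) by (intro psubset_card_mono) auto
      then have "d' \<in> nat_span R" using less.hyps \<open>d' \<in> D\<close> by blast
      then show ?thesis
        using nat_span_add[OF frac_in_nat_span[OF assms(2) \<open>r \<in> R\<close>]] d by simp
    qed
  qed
qed

lemma mem_circ_setdiff_iff: "d \<in> circ_setdiff X Y \<longleftrightarrow> (\<exists>x\<in>X. \<exists>y\<in>Y. d = frac (x - y))"
  by (auto simp: circ_setdiff_def circ_sub_def)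

lemma finite_circ_setdiff:
  assumes "finite X" "finite Y"
  shows "finite (circ_setdiff X Y)"
proof -
  have "circ_setdiff X Y = (\<lambda>(x, y). circ_sub x y) ` (X \<times> Y)"
    by (auto simp: circ_setdiff_def)
  then show ?thesis using assms by simp
qed

lemma finite_R_minus: "finite C \<Longrightarrow> finite (R_minus B C)"
  unfolding R_minus_def by simp

lemma finite_R_plus: "finite C \<Longrightarrow> finite (R_plus B C)"
  unfolding R_plus_def by simp

lemma R_minus_subset_circ_setdiff:
  assumes "finite B" "inj_on frac B" "C \<subseteq> B"
  shows "R_minus B C \<subseteq> circ_setdiff B B"
  using assms smaller_nb[OF assms(1) _ assms(2)]
  by (fastforce simp: R_minus_def circ_setdiff_def)

lemma R_plus_subset_circ_setdiff:
  assumes "finite B" "inj_on frac B" "C \<subseteq> B"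
  shows "R_plus B C \<subseteq> circ_setdiff B B"
  using assms larger_nb[OF assms(1) _ assms(2)]
  by (fastforce simp: R_plus_def circ_setdiff_def)

lemma circ_setdiff_subset_nat_span_R_minus:
  assumes "finite B" "inj_on frac B" "C \<subseteq> B" and C_diff: "circ_setdiff C B = circ_setdiff B B"
  shows "circ_setdiff B B \<subseteq> nat_span (R_minus B C)"
proof (rule subset_nat_span_by_descent[where \<mu> = "\<lambda>x. x"])
  show "finite (circ_setdiff B B)" "finite (R_minus B C)"
    using assms(1,3) by (auto intro: finite_circ_setdiff finite_R_minus finite_subset)
next
  fix d assume "d \<in> circ_setdiff B B" "d \<noteq> 0"
  then have "d \<in> circ_setdiff C B" using C_diff by simp
  then obtain c b where "c \<in> C" "b \<in> B" and d: "d = frac (c - b)"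
    unfolding mem_circ_setdiff_iff by blast
  define s where "s = smaller_nb B c"
  have "c \<in> B" "b \<noteq> c" using \<open>c \<in> C\<close> assms(3) \<open>d \<noteq> 0\<close> d by auto
  then have "s \<in> B" using smaller_nb[OF assms(1) _ assms(2)] s_def by blast
  show "\<exists>r\<in>R_minus B C. \<exists>d'\<in>circ_setdiff B B. d' < d \<and> d = frac (r + d')"
  proof (intro bexI conjI)
    show "circ_sub c s \<in> R_minus B C" using \<open>c \<in> C\<close> by (auto simp: R_minus_def s_def)
    show "frac (s - b) \<in> circ_setdiff B B" using \<open>s \<in> B\<close> \<open>b \<in> B\<close> by (auto simp: mem_circ_setdiff_iff)
    show "frac (s - b) < d"
      using frac_diff_smaller_nb_less assms(1,2) \<open>b \<in> B\<close> \<open>c \<in> B\<close> \<open>b \<noteq> c\<close> d s_def by blast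
    show "d = frac (circ_sub c s + frac (s - b))" by (simp add: d circ_sub_def)
  qed
qed

lemma circ_setdiff_subset_nat_span_R_plus:
  assumes "finite B" "inj_on frac B" "C \<subseteq> B" and C_diff: "circ_setdiff C B = circ_setdiff B B"
  shows "circ_setdiff B B \<subseteq> nat_span (R_plus B C)"
proof (rule subset_nat_span_by_descent[where \<mu> = "\<lambda>x. frac (- x)"])
  show "finite (circ_setdiff B B)" "finite (R_plus B C)"
    using assms(1,3) by (auto intro: finite_circ_setdiff finite_R_plus finite_subset)
next
  fix d assume "d \<in> circ_setdiff B B" "d \<noteq> 0"
  then have "d \<in> circ_setdiff C B" using C_diff by simp
  then obtain c b where "c \<in> C" "b \<in> B" and d: "d = frac (c - b)"
    unfolding mem_circ_setdiff_iff by blast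
  define p where "p = larger_nb B c"
  have "c \<in> B" "b \<noteq> c" using \<open>c \<in> C\<close> assms(3) \<open>d \<noteq> 0\<close> d by auto
  then have "p \<in> B" using larger_nb[OF assms(1) _ assms(2)] p_def by blast
  show "\<exists>r\<in>R_plus B C. \<exists>d'\<in>circ_setdiff B B. frac (- d') < frac (- d) \<and> d = frac (r + d')"
  proof (intro bexI conjI)
    show "circ_sub c p \<in> R_plus B C" using \<open>c \<in> C\<close> by (auto simp: R_plus_def p_def)
    show "frac (p - b) \<in> circ_setdiff B B" using \<open>p \<in> B\<close> \<open>b \<in> B\<close> by (auto simp: mem_circ_setdiff_iff)
    show "frac (- frac (p - b)) < frac (- d)"
      using frac_diff_larger_nb_less[OF assms(1,2) \<open>b \<in> B\<close> \<open>c \<in> B\<close> \<open>b \<noteq> c\<close>]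
      by (simp add: d frac_neg_frac p_def)
    show "d = frac (circ_sub c p + frac (p - b))" by (simp add: d circ_sub_def)
  qed
qed

theorem theorem2:
  fixes B C :: "real set"
  assumes "finite B" and "B \<noteq> {}" and "B \<subseteq> {0..<1}"
    and "C \<subseteq> B"
    and "circ_setdiff C B = circ_setdiff B B"
  shows "circ_setdiff B B \<subseteq> nat_span (R_minus B C)
     \<and> circ_setdiff B B \<subseteq> nat_span (R_plus B C)
     \<and> nat_span (R_minus B C) = nat_span (R_plus B C)"
proof -
  have inj: "inj_on frac B"
    using assms(3) by (intro inj_onI) (auto simp: subset_iff)
  have finite_C: "finite C" using assms(1,4) by (rule finite_subset[rotated])
  note minus = circ_setdiff_subset_nat_span_R_minus[OF assms(1) inj assms(4,5)]
  note plus = circ_setdiff_subset_nat_span_R_plus[OF assms(1) inj assms(4,5)]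
  have "nat_span (R_minus B C) \<subseteq> nat_span (R_plus B C)"
    using R_minus_subset_circ_setdiff[OF assms(1) inj assms(4)] plus
    by (intro nat_span_subset_nat_span finite_R_minus finite_C) blast
  moreover have "nat_span (R_plus B C) \<subseteq> nat_span (R_minus B C)"
    using R_plus_subset_circ_setdiff[OF assms(1) inj assms(4)] minus
    by (intro nat_span_subset_nat_span finite_R_plus finite_C) blast
  ultimately show ?thesis using minus plus by blast
qed

end
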